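(* Let $A,\beta,\xi_0,\theta>0$ and $0<\alpha<\frac12$. Let $v_{n,m}\colon(0,\xi_0]\to[0,\infty)$, for integers $n,m\ge0$, and let $w\colon(0,\xi_0]\to[0,\infty)$ be bounded. Suppose that for all $n,m,k\ge0$ and $\xi\in(0,\xi_0]$: (1) $v_{n+1,m}(\xi)\le v_{n,m}(\xi)$; (2) $v_{n+k,m}(\xi)\le4(1-A\xi^2)^kv_{n,m}(\xi)$; (3) $v_{0,m}(\xi)\le\theta^{-m}w(\xi)$. Then for any $c>0$ the sequence $t_n=\sup\{v_{n,m}(\xi):\ n^{-\alpha}<\xi\le\xi_0,\ m\in\mathbb Z_{\ge0},\ m<c\log n\}$ decays rapidly in $n$.
   Context: A sequence $\{t_n\}$ decays rapidly in $n$ if for each $\ell\ge1$ there is $C$ with $|t_n|\le Cn^{-\ell}$ for all $n\ge1$ (a supremum over the empty set is taken to be $0$). *)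

theory Defs
  imports Complex_Main
begin

definition sup0 :: "real set \<Rightarrow> real" where
  "sup0 S = (if S = {} then 0 else Sup S)"

definition decays_rapidly :: "(nat \<Rightarrow> real) \<Rightarrow> bool" where
  "decays_rapidly t \<longleftrightarrow>
     (\<forall>l::nat. l \<ge> 1 \<longrightarrow> (\<exists>C::real. \<forall>n::nat. n \<ge> 1 \<longrightarrow> \<bar>t n\<bar> \<le> C * real n powr (- real l)))"

end

theory Submission
  imports Defs
begin

(* By (2) with n = 0 and (3), v_{n,m}(xi) <= 4 exp(-A xi^2 n) theta^(-m) w(xi); when
   A xi^2 > 1 the factor 1 - A xi^2 in (2) is negative, which forces v_{n,m}(xi) = 0 for n >= 1.
   On the range xi > n^(-alpha), m < c log n we have n xi^2 >= n^(1 - 2 alpha) and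
   theta^(-m) <= n^(c |log theta|), so t_n is at most a constant times
   n^(c |log theta|) exp(-A n^(1 - 2 alpha)), which decays faster than any power of n because
   exp(-y) <= N!/y^N. *)

lemma power_div_fact_le_exp:
  fixes x :: real
  assumes "x \<ge> 0"
  shows "x ^ N / fact N \<le> exp x"
proof -
  have summable: "summable (\<lambda>n. x ^ n /\<^sub>R fact n)"
    using exp_converges[of x] sums_summable by blast
  have "(\<Sum>n\<in>{N}. x ^ n /\<^sub>R fact n) \<le> (\<Sum>n. x ^ n /\<^sub>R fact n)"
    by (rule sum_le_suminf[OF summable]) (use assms in auto)
  also have "\<dots> = exp x"
    using exp_converges[of x] sums_unique by metis
  finally show ?thesis
    by (simp add: divide_inverse mult.commute)
qed

lemma exp_neg_le_fact_div_power:
  fixes x :: real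
  assumes "x > 0"
  shows "exp (- x) \<le> fact N / x ^ N"
proof -
  have "x ^ N / fact N \<le> exp x"
    using assms by (intro power_div_fact_le_exp) simp
  then have "1 / exp x \<le> 1 / (x ^ N / fact N)"
    using assms by (intro divide_left_mono) auto
  then show ?thesis
    by (simp add: exp_minus inverse_eq_divide)
qed

lemma abs_sup0_le:
  assumes "\<And>x. x \<in> S \<Longrightarrow> 0 \<le> x" and "\<And>x. x \<in> S \<Longrightarrow> x \<le> E" and "0 \<le> E"
  shows "\<bar>sup0 S\<bar> \<le> E"
proof (cases "S = {}")
  case False
  then obtain x where "x \<in> S" by blast
  moreover have "bdd_above S"
    using assms(2) by (auto simp: bdd_above_def)
  ultimately have "0 \<le> Sup S"
    using assms(1) cSup_upper order_trans by blast
  moreover have "Sup S \<le> E"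
    using False assms(2) by (intro cSup_least) auto
  ultimately show ?thesis
    using False by (simp add: sup0_def)
qed (use assms(3) in \<open>simp add: sup0_def\<close>)

lemma decays_rapidly_if_dominated:
  assumes "decays_rapidly s" and "\<And>n. n \<ge> 1 \<Longrightarrow> \<bar>t n\<bar> \<le> K * \<bar>s n\<bar>"
  shows "decays_rapidly t"
  unfolding decays_rapidly_def
proof (intro allI impI)
  fix l :: nat
  assume "l \<ge> 1"
  then obtain C where C: "\<And>n. n \<ge> 1 \<Longrightarrow> \<bar>s n\<bar> \<le> C * real n powr (- real l)"
    using assms(1) unfolding decays_rapidly_def by blast
  have "\<bar>t n\<bar> \<le> (\<bar>K\<bar> * C) * real n powr (- real l)" if "n \<ge> 1" for n
  proof -
    have "\<bar>t n\<bar> \<le> \<bar>K\<bar> * \<bar>s n\<bar>"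
      using assms(2)[OF that] by (meson abs_ge_self mult_right_mono abs_ge_zero order_trans)
    also have "\<dots> \<le> \<bar>K\<bar> * (C * real n powr (- real l))"
      using C[OF that] by (intro mult_left_mono) auto
    finally show ?thesis by simp
  qed
  then show "\<exists>C. \<forall>n\<ge>1. \<bar>t n\<bar> \<le> C * real n powr (- real l)"
    by blast
qed

lemma decays_rapidly_sup0:
  assumes "decays_rapidly g" and "\<And>n x. n \<ge> 1 \<Longrightarrow> x \<in> S n \<Longrightarrow> 0 \<le> x \<and> x \<le> K * \<bar>g n\<bar>"
  shows "decays_rapidly (\<lambda>n. sup0 (S n))"
proof (rule decays_rapidly_if_dominated[OF assms(1)])
  show "\<bar>sup0 (S n)\<bar> \<le> \<bar>K\<bar> * \<bar>g n\<bar>" if "n \<ge> 1" for n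
    using assms(2)[OF that] mult_right_mono[OF abs_ge_self[of K] abs_ge_zero[of "g n"]]
    by (intro abs_sup0_le) (auto intro: order_trans)
qed

lemma decays_rapidly_powr_mult_exp:
  fixes a b p :: real
  assumes "a > 0" and "b > 0"
  shows "decays_rapidly (\<lambda>n. real n powr p * exp (- b * real n powr a))"
  unfolding decays_rapidly_def
proof (intro allI impI)
  fix l :: nat
  obtain N :: nat where "(p + real l) / a < real N"
    using reals_Archimedean2 by blast
  then have N: "p - real N * a \<le> - real l"
    using assms(1) by (simp add: divide_less_eq)
  have "real n powr p * exp (- b * real n powr a) \<le> fact N / b ^ N * real n powr (- real l)"
    if "n \<ge> 1" for n
  proof -
    have n: "real n > 0" using that by simp
    have "exp (- (b * real n powr a)) \<le> fact N / (b * real n powr a) ^ N"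
      using n assms by (intro exp_neg_le_fact_div_power) simp
    also have "\<dots> = fact N / b ^ N / real n powr (real N * a)"
      using n by (simp add: power_mult_distrib powr_realpow[symmetric] powr_powr mult.commute)
    finally have "real n powr p * exp (- b * real n powr a)
        \<le> real n powr p * (fact N / b ^ N / real n powr (real N * a))"
      by (intro mult_left_mono) auto
    also have "\<dots> = fact N / b ^ N * (real n powr p / real n powr (real N * a))"
      by simp
    also have "\<dots> \<le> fact N / b ^ N * real n powr (- real l)"
      unfolding powr_diff[symmetric] using that N assms(2) by (intro mult_left_mono powr_mono) auto
    finally show ?thesis .
  qed
  then show "\<exists>C. \<forall>n\<ge>1. \<bar>real n powr p * exp (- b * real n powr a)\<bar> \<le> C * real n powr (- real l)"
    by (intro exI[of _ "fact N / b ^ N"]) simp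
qed

lemma exp_bound_of_geometric_decay:
  fixes u :: "nat \<Rightarrow> real"
  assumes nonneg: "\<And>n. u n \<ge> 0" and "C \<ge> 0"
    and decay: "\<And>n k. u (n + k) \<le> C * (1 - q) ^ k * u n"
  shows "u n \<le> C * exp (- q * real n) * u 0"
proof (cases "q \<le> 1")
  case True
  have "(1 - q) ^ n \<le> exp (- q) ^ n"
    using True exp_ge_add_one_self[of "- q"] by (intro power_mono) auto
  also have "\<dots> = exp (- q * real n)"
    by (simp add: exp_of_nat_mult[symmetric] mult.commute)
  finally have "C * (1 - q) ^ n * u 0 \<le> C * exp (- q * real n) * u 0"
    using \<open>C \<ge> 0\<close> nonneg by (intro mult_right_mono mult_left_mono) auto
  then show ?thesis
    using decay[of 0 n] by simp
next
  case False
  show ?thesis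
  proof (cases n)
    case 0
    then show ?thesis using decay[of 0 0] by simp
  next
    case (Suc k)
    have "u n \<le> C * (1 - q) * u k"
      using decay[of k 1] Suc by simp
    also have "\<dots> \<le> 0"
      using False \<open>C \<ge> 0\<close> nonneg[of k] by (intro mult_nonpos_nonneg mult_nonneg_nonpos) auto
    also have "\<dots> \<le> C * exp (- q * real n) * u 0"
      using \<open>C \<ge> 0\<close> nonneg[of 0] by simp
    finally show ?thesis .
  qed
qed

lemma powr_neg_le_powr_if_less_ln:
  fixes \<theta> x c :: real
  assumes "\<theta> > 0" and "x > 0" and "real m < c * ln x"
  shows "\<theta> powr (- real m) \<le> x powr (c * \<bar>ln \<theta>\<bar>)"
proof -
  have "- real m * ln \<theta> \<le> real m * \<bar>ln \<theta>\<bar>"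
    by (metis abs_ge_minus_self abs_mult abs_of_nat mult_minus_left)
  also have "\<dots> \<le> c * ln x * \<bar>ln \<theta>\<bar>"
    using assms(3) by (intro mult_right_mono) auto
  also have "\<dots> = c * \<bar>ln \<theta>\<bar> * ln x"
    by simp
  finally show ?thesis
    using assms(1,2) by (simp add: powr_def)
qed

lemma powr_one_minus_two_le:
  fixes x \<xi> \<alpha> :: real
  assumes "x > 0" and "x powr (- \<alpha>) \<le> \<xi>"
  shows "x powr (1 - 2 * \<alpha>) \<le> x * \<xi>\<^sup>2"
proof -
  have "x powr (1 - 2 * \<alpha>) = x * (x powr (- \<alpha>))\<^sup>2"
  proof -
    have "x powr (1 - 2 * \<alpha>) = x powr 1 * (x powr (- \<alpha>) * x powr (- \<alpha>))"
      unfolding powr_add[symmetric] by simp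
    then show ?thesis
      using assms(1) by (simp add: power2_eq_square)
  qed
  also have "\<dots> \<le> x * \<xi>\<^sup>2"
    using assms by (intro mult_left_mono power_mono) auto
  finally show ?thesis .
qed

lemma decay_bound_on_range:
  fixes u :: "nat \<Rightarrow> real" and A C B \<theta> \<alpha> \<xi> c :: real
  assumes "A \<ge> 0" and "C \<ge> 0" and "\<theta> > 0" and n: "n \<ge> 1"
    and \<xi>: "real n powr (- \<alpha>) \<le> \<xi>" and m: "real m < c * ln (real n)"
    and nonneg: "\<And>n. 0 \<le> u n" and decay: "\<And>n k. u (n + k) \<le> C * (1 - A * \<xi>\<^sup>2) ^ k * u n"
    and initial: "u 0 \<le> \<theta> powr (- real m) * B"
  shows "u n \<le> C * B * (real n powr (c * \<bar>ln \<theta>\<bar>) * exp (- A * real n powr (1 - 2 * \<alpha>)))"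
proof -
  have "0 \<le> \<theta> powr (- real m) * B"
    using nonneg[of 0] initial by linarith
  then have "B \<ge> 0"
    using \<open>\<theta> > 0\<close> by (simp add: zero_le_mult_iff)
  have "u n \<le> C * exp (- (A * \<xi>\<^sup>2) * real n) * u 0"
    using nonneg \<open>C \<ge> 0\<close> decay by (rule exp_bound_of_geometric_decay)
  also have "\<dots> \<le> C * exp (- (A * \<xi>\<^sup>2) * real n) * (\<theta> powr (- real m) * B)"
    using initial \<open>C \<ge> 0\<close> by (intro mult_left_mono) auto
  also have "\<dots> = C * B * (\<theta> powr (- real m) * exp (- (A * \<xi>\<^sup>2) * real n))"
    by simp
  also have "\<dots> \<le> C * B * (real n powr (c * \<bar>ln \<theta>\<bar>) * exp (- A * real n powr (1 - 2 * \<alpha>)))"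
  proof (intro mult_left_mono mult_mono)
    show "\<theta> powr (- real m) \<le> real n powr (c * \<bar>ln \<theta>\<bar>)"
      using \<open>\<theta> > 0\<close> n m by (intro powr_neg_le_powr_if_less_ln) auto
    have "A * real n powr (1 - 2 * \<alpha>) \<le> A * (real n * \<xi>\<^sup>2)"
      using powr_one_minus_two_le[of "real n" \<alpha> \<xi>] n \<xi> \<open>A \<ge> 0\<close> by (intro mult_left_mono) auto
    then show "exp (- (A * \<xi>\<^sup>2) * real n) \<le> exp (- A * real n powr (1 - 2 * \<alpha>))"
      by (simp add: ac_simps)
  qed (use \<open>C \<ge> 0\<close> \<open>B \<ge> 0\<close> in auto)
  finally show ?thesis .
qed

theorem proposition7p6:
  fixes A \<beta> \<xi>0 \<theta> \<alpha> c :: real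
    and v :: "nat \<Rightarrow> nat \<Rightarrow> real \<Rightarrow> real"
    and w :: "real \<Rightarrow> real"
  assumes "A > 0" "\<beta> > 0" "\<xi>0 > 0" "\<theta> > 0"
    and "0 < \<alpha>" "\<alpha> < 1/2"
    and v_nonneg: "\<And>n m \<xi>. \<xi> \<in> {0<..\<xi>0} \<Longrightarrow> v n m \<xi> \<ge> 0"
    and w_nonneg: "\<And>\<xi>. \<xi> \<in> {0<..\<xi>0} \<Longrightarrow> w \<xi> \<ge> 0"
    and w_bdd: "\<exists>B. \<forall>\<xi>\<in>{0<..\<xi>0}. w \<xi> \<le> B"
    and h1: "\<And>n m \<xi>. \<xi> \<in> {0<..\<xi>0} \<Longrightarrow> v (n + 1) m \<xi> \<le> v n m \<xi>"
    and h2: "\<And>n m k \<xi>. \<xi> \<in> {0<..\<xi>0} \<Longrightarrow>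
               v (n + k) m \<xi> \<le> 4 * (1 - A * \<xi>^2) ^ k * v n m \<xi>"
    and h3: "\<And>m \<xi>. \<xi> \<in> {0<..\<xi>0} \<Longrightarrow> v 0 m \<xi> \<le> \<theta> powr (- real m) * w \<xi>"
    and "c > 0"
  shows "decays_rapidly (\<lambda>n. sup0 {v n m \<xi> | m \<xi>.
            real n powr (- \<alpha>) < \<xi> \<and> \<xi> \<le> \<xi>0 \<and> real m < c * ln (real n)})"
proof -
  obtain B where B: "\<forall>\<xi>\<in>{0<..\<xi>0}. w \<xi> \<le> B"
    using w_bdd by blast
  define g where "g n = real n powr (c * \<bar>ln \<theta>\<bar>) * exp (- A * real n powr (1 - 2 * \<alpha>))" for n
  have "decays_rapidly g"
    unfolding g_def using \<open>\<alpha> < 1/2\<close> \<open>A > 0\<close> by (intro decays_rapidly_powr_mult_exp) auto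
  then show ?thesis
  proof (rule decays_rapidly_sup0)
    fix n x
    assume n: "n \<ge> 1"
      and "x \<in> {v n m \<xi> | m \<xi>. real n powr (- \<alpha>) < \<xi> \<and> \<xi> \<le> \<xi>0 \<and> real m < c * ln (real n)}"
    then obtain m \<xi> where x: "x = v n m \<xi>" and \<xi>: "real n powr (- \<alpha>) < \<xi>" "\<xi> \<le> \<xi>0"
      and m: "real m < c * ln (real n)"
      by blast
    have "0 < real n powr (- \<alpha>)"
      using n by simp
    then have \<xi>_in: "\<xi> \<in> {0<..\<xi>0}"
      using \<xi> by (auto simp del: powr_gt_zero)
    have "v 0 m \<xi> \<le> \<theta> powr (- real m) * max B 0"
      using h3[OF \<xi>_in, of m] bspec[OF B \<xi>_in]
      by (meson order_trans max.coboundedI1 mult_left_mono powr_ge_zero)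
    then have "v n m \<xi> \<le> 4 * max B 0 * g n"
      unfolding g_def using \<open>A > 0\<close> \<open>\<theta> > 0\<close> n \<xi> m v_nonneg[OF \<xi>_in] h2[OF \<xi>_in]
      by (intro decay_bound_on_range[where u = "\<lambda>n. v n m \<xi>" and \<xi> = \<xi>]) auto
    then show "0 \<le> x \<and> x \<le> 4 * max B 0 * \<bar>g n\<bar>"
      using x v_nonneg[OF \<xi>_in] by (simp add: g_def)
  qed
qed

end
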